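(* Let $\mathbb{F}$ be a finite field, let $\ell,h,n,d$ be positive integers, and let $P\subseteq\mathbb{F}[w_1,\dots,w_\ell]$ be a maximal ideal such that $\mathbb{E}=\mathbb{F}[w_1,\dots,w_\ell]/P$ is a finite field extension of $\mathbb{F}$ of degree $k$, and such that every coset $g+P\in\mathbb{E}$ contains an element of $\mathbb{F}[w_1,\dots,w_\ell]$ of total degree at most $h$. Let $\{g_1+P,\dots,g_k+P\}$ be a basis of $\mathbb{E}$ over $\mathbb{F}$, for each $i$ let $g_i'\in g_i+P$ have total degree at most $h$, and let $\varphi:\mathbb{E}\to\mathbb{F}^{\le h}[w_1,\dots,w_\ell]$ be the $\mathbb{F}$-linear map with $\varphi(g_i+P)=g_i'$ for all $i$ (applied coordinate-wise to vectors). Let $\widehat H:S\to\mathbb{E}^n$ be a hitting set generator with density $1-\delta$ for $n$-variate polynomials of degree at most $d$ over $\mathbb{E}$. Then $H=\varphi\circ\widehat H:S\to(\mathbb{F}^{\le h}[w_1,\dots,w_\ell])^n$ is a polynomial hitting set generator with density $1-\delta$ for $n$-variate polynomials of degree at most $d$ over $\mathbb{F}$ with $\ell$-variate polynomial evaluation points of degree at most $h$.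
   Context: $\mathbb{F}^{\le h}[w_1,\dots,w_\ell]$ denotes the polynomials in $w_1,\dots,w_\ell$ over $\mathbb{F}$ of total degree at most $h$. A hitting set generator (HSG) with density $1-\delta$ for $n$-variate polynomials of degree at most $d$ over a field $\mathbb{E}$ is a map $H:T\to\mathbb{E}^n$ from a finite nonempty set $T$ such that for every nonzero $f\in\mathbb{E}[x_1,\dots,x_n]$ of total degree at most $d$, $\Pr_{t\in T}[f(H(t))\neq 0]\ge 1-\delta$ ($t$ uniform). A polynomial hitting set generator (PHSG) with density $1-\delta$ for $n$-variate polynomials of degree at most $d$ over $\mathbb{F}$ with $\ell$-variate polynomial evaluation points of degree at most $h$ is a map $H:T\to(\mathbb{F}^{\le h}[w_1,\dots,w_\ell])^n$ from a finite nonempty set $T$ such that for every nonzero $f\in\mathbb{F}[x_1,\dots,x_n]$ of total degree at most $d$, $\Pr_{y\in T}[f(H(y))=0]\le\delta$, where $f(H(y))\in\mathbb{F}[w_1,\dots,w_\ell]$ is the composed polynomial and $y$ is uniform in $T$. Its seed length is $\log|T|$. *)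

theory Defs
  imports Complex_Main "HOL-Library.Poly_Mapping"
begin

text \<open>Multivariate polynomials: finitely supported maps from monomials (exponent
vectors, variable i having index i) to coefficients.  Variable w_{i+1} / x_{i+1}
is represented by index i.\<close>

type_synonym 'a mpoly = "(nat \<Rightarrow>\<^sub>0 nat) \<Rightarrow>\<^sub>0 'a"

definition mon_deg :: "(nat \<Rightarrow>\<^sub>0 nat) \<Rightarrow> nat" where
  "mon_deg m = (\<Sum>i\<in>Poly_Mapping.keys m. Poly_Mapping.lookup m i)"

text \<open>Total degree (the zero polynomial gets degree 0).\<close>
definition tdeg :: "'a::zero mpoly \<Rightarrow> nat" where
  "tdeg p = Max (insert 0 (mon_deg ` Poly_Mapping.keys p))"

definition polys :: "nat \<Rightarrow> 'a::zero mpoly set" where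
  "polys m = {p. \<forall>mo\<in>Poly_Mapping.keys p. Poly_Mapping.keys mo \<subseteq> {..<m}}"

definition polys_le :: "nat \<Rightarrow> nat \<Rightarrow> 'a::zero mpoly set" where
  "polys_le m h = {p \<in> polys m. tdeg p \<le> h}"

definition Const :: "'a::zero \<Rightarrow> 'a mpoly" where
  "Const c = Poly_Mapping.single 0 c"

definition eval_mpoly :: "('a::zero \<Rightarrow> 'b::comm_ring_1) \<Rightarrow> (nat \<Rightarrow> 'b) \<Rightarrow> 'a mpoly \<Rightarrow> 'b" where
  "eval_mpoly c x p = (\<Sum>mo\<in>Poly_Mapping.keys p. c (Poly_Mapping.lookup p mo) * (\<Prod>i\<in>Poly_Mapping.keys mo. x i ^ Poly_Mapping.lookup mo i))"

definition hsg :: "nat \<Rightarrow> nat \<Rightarrow> 's set \<Rightarrow> ('s \<Rightarrow> nat \<Rightarrow> 'e::field) \<Rightarrow> real \<Rightarrow> bool" where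
  "hsg n d T H \<delta> \<longleftrightarrow> finite T \<and> T \<noteq> {} \<and>
     (\<forall>f :: 'e mpoly. f \<noteq> 0 \<and> f \<in> polys n \<and> tdeg f \<le> d \<longrightarrow>
        real (card {t\<in>T. eval_mpoly id (H t) f \<noteq> 0}) / real (card T) \<ge> 1 - \<delta>)"

text \<open>Polynomial hitting set generator with density 1 - delta for n-variate
polynomials of degree at most d over 'a with l-variate polynomial evaluation points
of degree at most h.  f(H(y)) is the composed polynomial in 'a mpoly.\<close>
definition phsg :: "nat \<Rightarrow> nat \<Rightarrow> nat \<Rightarrow> nat \<Rightarrow> 's set \<Rightarrow> ('s \<Rightarrow> nat \<Rightarrow> 'a::field mpoly) \<Rightarrow> real \<Rightarrow> bool" where
  "phsg l h n d T H \<delta> \<longleftrightarrow> finite T \<and> T \<noteq> {} \<and>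
     (\<forall>y\<in>T. \<forall>i<n. H y i \<in> polys_le l h) \<and>
     (\<forall>f :: 'a mpoly. f \<noteq> 0 \<and> f \<in> polys n \<and> tdeg f \<le> d \<longrightarrow>
        real (card {y\<in>T. eval_mpoly Const (H y) f = 0}) / real (card T) \<le> \<delta>)"

definition is_ideal :: "nat \<Rightarrow> 'a::comm_ring_1 mpoly set \<Rightarrow> bool" where
  "is_ideal l I \<longleftrightarrow> I \<subseteq> polys l \<and> 0 \<in> I \<and>
     (\<forall>p\<in>I. \<forall>q\<in>I. p + q \<in> I) \<and> (\<forall>p\<in>I. \<forall>q\<in>polys l. q * p \<in> I)"

definition is_maximal_ideal :: "nat \<Rightarrow> 'a::comm_ring_1 mpoly set \<Rightarrow> bool" where
  "is_maximal_ideal l I \<longleftrightarrow> is_ideal l I \<and> I \<noteq> polys l \<and>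
     (\<forall>J. is_ideal l J \<and> I \<subseteq> J \<longrightarrow> J = I \<or> J = polys l)"

text \<open>The field 'e together with pi is the quotient F[w_1..w_l]/P: pi is a surjective
ring homomorphism from polys l onto 'e whose kernel is P (pi g is the coset g + P).\<close>
definition is_quotient_map :: "nat \<Rightarrow> 'a::comm_ring_1 mpoly set \<Rightarrow> ('a mpoly \<Rightarrow> 'e::field) \<Rightarrow> bool" where
  "is_quotient_map l P \<pi> \<longleftrightarrow>
     (\<forall>p\<in>polys l. \<forall>q\<in>polys l. \<pi> (p + q) = \<pi> p + \<pi> q \<and> \<pi> (p * q) = \<pi> p * \<pi> q) \<and>
     \<pi> 1 = 1 \<and> \<pi> ` polys l = UNIV \<and> (\<forall>p\<in>polys l. \<pi> p = 0 \<longleftrightarrow> p \<in> P)"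

text \<open>F-scalar multiplication on E: c * (g + P) = (c g) + P.\<close>
definition fsmult :: "('a::zero mpoly \<Rightarrow> 'e::field) \<Rightarrow> 'a \<Rightarrow> 'e \<Rightarrow> 'e" where
  "fsmult \<pi> c e = \<pi> (Const c) * e"

definition is_F_basis :: "('a::zero mpoly \<Rightarrow> 'e::field) \<Rightarrow> nat \<Rightarrow> (nat \<Rightarrow> 'e) \<Rightarrow> bool" where
  "is_F_basis \<pi> k b \<longleftrightarrow>
     (\<forall>c. (\<Sum>i<k. fsmult \<pi> (c i) (b i)) = 0 \<longrightarrow> (\<forall>i<k. c i = 0)) \<and>
     (\<forall>e. \<exists>c. e = (\<Sum>i<k. fsmult \<pi> (c i) (b i)))"

end

theory Submission
  imports Defs
begin

text \<open>The quotient map \<open>\<pi>\<close> is a ring homomorphism, and \<open>\<phi>\<close> is a section of it: being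
\<open>\<bbbF>\<close>-linear and agreeing on a basis with the coset representatives \<open>g'\<^sub>i\<close>, it satisfies
\<open>\<pi> (\<phi> e) = e\<close>, and its values have degree at most \<open>h\<close>.  Hence for \<open>f\<close> over \<open>\<bbbF>\<close>,
\<open>\<pi> (f (\<phi> (Hhat y))) = f\<^sub>\<bbbE> (Hhat y)\<close>, where \<open>f\<^sub>\<bbbE>\<close> is \<open>f\<close> with coefficients embedded in \<open>\<bbbE>\<close>
via \<open>c \<mapsto> \<pi> (Const c)\<close>.  This embedding is injective because \<open>\<bbbF>\<close> is a field, so \<open>f\<^sub>\<bbbE>\<close> has
the same monomials as \<open>f\<close>, and every seed on which \<open>Hhat\<close> hits \<open>f\<^sub>\<bbbE>\<close> is a seed on which
the composed polynomial \<open>f (\<phi> (Hhat y))\<close> is nonzero.\<close>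

lemma polys_add: "p \<in> polys l \<Longrightarrow> q \<in> polys l \<Longrightarrow> p + q \<in> polys l"
  unfolding polys_def using keys_add[of p q] by blast

lemma polys_mult:
  assumes "p \<in> polys l" "(q::'a::comm_ring_1 mpoly) \<in> polys l"
  shows "p * q \<in> polys l"
  unfolding polys_def mem_Collect_eq
proof
  fix mo assume "mo \<in> Poly_Mapping.keys (p * q)"
  then obtain a b where ab: "mo = a + b" "a \<in> Poly_Mapping.keys p" "b \<in> Poly_Mapping.keys q"
    using keys_mult[of p q] by blast
  have "Poly_Mapping.keys mo \<subseteq> Poly_Mapping.keys a \<union> Poly_Mapping.keys b"
    unfolding ab(1) by (rule keys_add)
  moreover have "Poly_Mapping.keys a \<union> Poly_Mapping.keys b \<subseteq> {..<l}"
    using ab(2,3) assms by (auto simp: polys_def)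
  ultimately show "Poly_Mapping.keys mo \<subseteq> {..<l}" by blast
qed

lemma polys_zero: "0 \<in> polys l"
  unfolding polys_def by simp

lemma polys_one: "(1::'a::comm_ring_1 mpoly) \<in> polys l"
  unfolding polys_def by simp

lemma polys_uminus: "(p::'a::comm_ring_1 mpoly) \<in> polys l \<Longrightarrow> - p \<in> polys l"
  unfolding polys_def by simp

lemma polys_diff: "(p::'a::comm_ring_1 mpoly) \<in> polys l \<Longrightarrow> q \<in> polys l \<Longrightarrow> p - q \<in> polys l"
  using polys_add[OF _ polys_uminus] by fastforce

lemma polys_Const: "Const c \<in> polys l"
  unfolding polys_def Const_def by simp

lemma polys_sum:
  "(\<And>x. x \<in> A \<Longrightarrow> f x \<in> polys l) \<Longrightarrow> (\<Sum>x\<in>A. f x :: 'a::comm_ring_1 mpoly) \<in> polys l"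
  by (induction A rule: infinite_finite_induct) (auto simp: polys_zero polys_add)

lemma polys_prod:
  "(\<And>x. x \<in> A \<Longrightarrow> f x \<in> polys l) \<Longrightarrow> (\<Prod>x\<in>A. f x :: 'a::comm_ring_1 mpoly) \<in> polys l"
  by (induction A rule: infinite_finite_induct) (auto simp: polys_one polys_mult)

lemma polys_power: "(p::'a::comm_ring_1 mpoly) \<in> polys l \<Longrightarrow> p ^ m \<in> polys l"
  by (induction m) (auto simp: polys_one polys_mult)

lemma tdeg_le_iff: "tdeg p \<le> h \<longleftrightarrow> (\<forall>mo\<in>Poly_Mapping.keys p. mon_deg mo \<le> h)"
  unfolding tdeg_def by simp

lemma polys_le_subset_polys: "polys_le l h \<subseteq> polys l"
  unfolding polys_le_def by blast

lemma polys_le_add: "p \<in> polys_le l h \<Longrightarrow> q \<in> polys_le l h \<Longrightarrow> p + q \<in> polys_le l h"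
  unfolding polys_le_def tdeg_le_iff using polys_add[of p l q] keys_add[of p q] by blast

lemma polys_le_zero: "0 \<in> polys_le l h"
  unfolding polys_le_def tdeg_le_iff by (simp add: polys_zero)

lemma polys_le_sum:
  "(\<And>x. x \<in> A \<Longrightarrow> f x \<in> polys_le l h) \<Longrightarrow> (\<Sum>x\<in>A. f x :: 'a::comm_ring_1 mpoly) \<in> polys_le l h"
  by (induction A rule: infinite_finite_induct) (auto simp: polys_le_zero polys_le_add)

lemma keys_map_subset: "Poly_Mapping.keys (Poly_Mapping.map f p) \<subseteq> Poly_Mapping.keys p"
  by transfer (auto simp: when_def)

lemma polys_le_Const_mult:
  "(p::'a::comm_ring_1 mpoly) \<in> polys_le l h \<Longrightarrow> Const c * p \<in> polys_le l h"
  using keys_map_subset[of "(*) c" p]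
  unfolding polys_le_def tdeg_le_iff polys_def Const_def mult_map_scale_conv_mult[symmetric]
  by blast

lemma lookup_map_of_zero:
  "f 0 = 0 \<Longrightarrow> Poly_Mapping.lookup (Poly_Mapping.map f p) k = f (Poly_Mapping.lookup p k)"
  by transfer (simp add: when_def)

lemma keys_map_of_inj_zero:
  assumes "\<And>c. f c = 0 \<longleftrightarrow> c = 0"
  shows "Poly_Mapping.keys (Poly_Mapping.map f p) = Poly_Mapping.keys p"
  using assms by (simp add: set_eq_iff in_keys_iff lookup_map_of_zero)

lemma eval_mpoly_map_coeffs:
  assumes "\<And>c. f c = 0 \<longleftrightarrow> c = 0"
  shows "eval_mpoly id X (Poly_Mapping.map f p) = eval_mpoly f X p"
  using assms unfolding eval_mpoly_def
  by (simp add: keys_map_of_inj_zero lookup_map_of_zero)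

lemma card_ratio_le_of_hits:
  assumes "finite S" "B \<subseteq> S" "A \<subseteq> S - B" "1 - \<delta> \<le> real (card B) / real (card S)"
  shows "real (card A) / real (card S) \<le> \<delta>"
proof (cases "S = {}")
  case True
  with assms show ?thesis by simp
next
  case False
  have "card A \<le> card S - card B"
    using card_mono[OF _ assms(3)] card_Diff_subset[OF _ assms(2)] assms(1,2)
    by (metis finite_Diff finite_subset)
  then have "real (card A) \<le> real (card S) - real (card B)"
    using card_mono[OF assms(1,2)] by linarith
  then have "real (card A) / real (card S) \<le> 1 - real (card B) / real (card S)"
    using False assms(1) by (simp add: field_simps card_gt_0_iff)
  with assms(4) show ?thesis by linarith
qed

locale polys_hom =
  fixes l :: nat and \<pi> :: "'a::comm_ring_1 mpoly \<Rightarrow> 'e::comm_ring_1"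
  assumes add: "p \<in> polys l \<Longrightarrow> q \<in> polys l \<Longrightarrow> \<pi> (p + q) = \<pi> p + \<pi> q"
    and mult: "p \<in> polys l \<Longrightarrow> q \<in> polys l \<Longrightarrow> \<pi> (p * q) = \<pi> p * \<pi> q"
    and one: "\<pi> 1 = 1"
begin

lemma zero: "\<pi> 0 = 0"
  using add[OF polys_zero polys_zero] by simp

lemma diff: "p \<in> polys l \<Longrightarrow> q \<in> polys l \<Longrightarrow> \<pi> (p - q) = \<pi> p - \<pi> q"
  using add[of "p - q" q] polys_diff[of p l q] by (simp add: algebra_simps)

lemma sum: "(\<And>x. x \<in> A \<Longrightarrow> f x \<in> polys l) \<Longrightarrow> \<pi> (\<Sum>x\<in>A. f x) = (\<Sum>x\<in>A. \<pi> (f x))"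
  by (induction A rule: infinite_finite_induct) (auto simp: zero add polys_sum)

lemma prod: "(\<And>x. x \<in> A \<Longrightarrow> f x \<in> polys l) \<Longrightarrow> \<pi> (\<Prod>x\<in>A. f x) = (\<Prod>x\<in>A. \<pi> (f x))"
  by (induction A rule: infinite_finite_induct) (auto simp: one mult polys_prod)

lemma power: "p \<in> polys l \<Longrightarrow> \<pi> (p ^ m) = \<pi> p ^ m"
  by (induction m) (auto simp: one mult polys_power)

lemma eval_mpoly_Const:
  "(\<And>i. X i \<in> polys l) \<Longrightarrow>
     \<pi> (eval_mpoly Const X f) = eval_mpoly (\<lambda>c. \<pi> (Const c)) (\<lambda>i. \<pi> (X i)) f"
  unfolding eval_mpoly_def
  by (simp add: sum prod mult power polys_mult polys_Const polys_prod polys_power)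

end

lemma polys_hom_Const_eq_0_iff:
  fixes \<pi> :: "'a::field mpoly \<Rightarrow> 'e::field"
  assumes "polys_hom l \<pi>"
  shows "\<pi> (Const c) = 0 \<longleftrightarrow> c = 0"
proof
  assume "\<pi> (Const c) = 0"
  show "c = 0"
  proof (rule ccontr)
    assume "c \<noteq> 0"
    then have "Const c * Const (inverse c) = 1"
      unfolding Const_def mult_single by simp
    then have "\<pi> (Const c) * \<pi> (Const (inverse c)) = 1"
      using polys_hom.mult[OF assms polys_Const polys_Const] polys_hom.one[OF assms] by metis
    with \<open>\<pi> (Const c) = 0\<close> show False by simp
  qed
next
  assume "c = 0"
  then show "\<pi> (Const c) = 0"
    using polys_hom.zero[OF assms] by (simp add: Const_def)
qed

lemma additive_basis_lift_is_section:
  fixes \<phi> :: "'e::field \<Rightarrow> 'a::field mpoly"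
  assumes hom: "polys_hom l \<pi>"
    and basis: "is_F_basis \<pi> k b"
    and g'_deg: "\<forall>i<k. g' i \<in> polys_le l h"
    and g'_lift: "\<forall>i<k. \<pi> (g' i) = b i"
    and \<phi>_add: "\<forall>x y. \<phi> (x + y) = \<phi> x + \<phi> y"
    and \<phi>_smult: "\<forall>c x. \<phi> (fsmult \<pi> c x) = Const c * \<phi> x"
    and \<phi>_basis: "\<forall>i<k. \<phi> (b i) = g' i"
  shows "\<phi> e \<in> polys_le l h" "\<pi> (\<phi> e) = e"
proof -
  have \<phi>_zero: "\<phi> 0 = 0"
    using \<phi>_add[rule_format, of 0 0] by (metis add.right_neutral add_left_cancel)
  have \<phi>_sum: "\<phi> (\<Sum>i\<in>A. f i) = (\<Sum>i\<in>A. \<phi> (f i))" for A :: "nat set" and f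
    by (induction A rule: infinite_finite_induct) (simp_all add: \<phi>_zero \<phi>_add)
  obtain c where c: "e = (\<Sum>i<k. fsmult \<pi> (c i) (b i))"
    using basis unfolding is_F_basis_def by blast
  have \<phi>_e: "\<phi> e = (\<Sum>i<k. Const (c i) * g' i)"
    unfolding c \<phi>_sum using \<phi>_smult \<phi>_basis by simp
  show "\<phi> e \<in> polys_le l h"
    unfolding \<phi>_e by (rule polys_le_sum) (simp add: polys_le_Const_mult g'_deg)
  have g'_polys: "g' i \<in> polys l" if "i < k" for i
    using g'_deg that polys_le_subset_polys by blast
  show "\<pi> (\<phi> e) = e"
    unfolding \<phi>_e
    by (subst polys_hom.sum[OF hom])
      (simp_all add: c fsmult_def polys_hom.mult[OF hom] polys_mult polys_Const g'_polys g'_lift)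
qed

lemma hsg_lift_phsg:
  fixes \<pi> :: "'a::field mpoly \<Rightarrow> 'e::field"
  assumes hom: "polys_hom l \<pi>"
    and lift_deg: "\<And>e. \<psi> e \<in> polys_le l h"
    and lift_section: "\<And>e. \<pi> (\<psi> e) = e"
    and Hhat: "hsg n d S Hhat \<delta>"
  shows "phsg l h n d S (\<lambda>y i. \<psi> (Hhat y i)) \<delta>"
proof -
  have S: "finite S" "S \<noteq> {}"
    using Hhat unfolding hsg_def by auto
  have "real (card {y\<in>S. eval_mpoly Const (\<lambda>i. \<psi> (Hhat y i)) f = 0}) / real (card S) \<le> \<delta>"
    if f: "f \<noteq> 0" "f \<in> polys n" "tdeg f \<le> d" for f
  proof -
    let ?emb = "\<lambda>c. \<pi> (Const c)"
    define fE where "fE = Poly_Mapping.map ?emb f"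
    have emb_eq_0_iff: "?emb c = 0 \<longleftrightarrow> c = 0" for c
      using polys_hom_Const_eq_0_iff[OF hom] .
    have keys_fE: "Poly_Mapping.keys fE = Poly_Mapping.keys f"
      unfolding fE_def using emb_eq_0_iff by (rule keys_map_of_inj_zero)
    have "fE \<noteq> 0" "fE \<in> polys n" "tdeg fE \<le> d"
      using f keys_fE unfolding polys_def tdeg_def by (auto simp flip: keys_eq_empty)
    then have hits: "1 - \<delta> \<le> real (card {y\<in>S. eval_mpoly id (Hhat y) fE \<noteq> 0}) / real (card S)"
      using Hhat unfolding hsg_def by blast
    have compose: "\<pi> (eval_mpoly Const (\<lambda>i. \<psi> (Hhat y i)) f) = eval_mpoly id (Hhat y) fE" for y
      using polys_hom.eval_mpoly_Const[OF hom, of "\<lambda>i. \<psi> (Hhat y i)" f]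
        lift_deg polys_le_subset_polys
      by (auto simp: lift_section fE_def eval_mpoly_map_coeffs[OF emb_eq_0_iff])
    then have "{y\<in>S. eval_mpoly Const (\<lambda>i. \<psi> (Hhat y i)) f = 0}
        \<subseteq> S - {y\<in>S. eval_mpoly id (Hhat y) fE \<noteq> 0}"
      by (auto simp flip: compose simp: polys_hom.zero[OF hom])
    from card_ratio_le_of_hits[OF S(1) _ this hits] show ?thesis by blast
  qed
  with S lift_deg show ?thesis
    unfolding phsg_def by blast
qed

theorem claim4p1:
  fixes l h n d k :: nat
    and P :: "'a::{finite,field} mpoly set"
    and \<pi> :: "'a mpoly \<Rightarrow> 'e::field"
    and g g' :: "nat \<Rightarrow> 'a mpoly"
    and \<phi> :: "'e \<Rightarrow> 'a mpoly"
    and S :: "'s set"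
    and Hhat :: "'s \<Rightarrow> nat \<Rightarrow> 'e"
    and \<delta> :: real
  assumes pos: "l > 0" "h > 0" "n > 0" "d > 0"
    and maxP: "is_maximal_ideal l P"
    and quot: "is_quotient_map l P \<pi>"
    and lowdeg: "\<forall>e. \<exists>q\<in>polys_le l h. \<pi> q = e"
    and g_in: "\<forall>i<k. g i \<in> polys l"
    and basis: "is_F_basis \<pi> k (\<lambda>i. \<pi> (g i))"
    and g'_deg: "\<forall>i<k. g' i \<in> polys_le l h"
    and g'_coset: "\<forall>i<k. g' i - g i \<in> P"
    and \<phi>_add: "\<forall>x y. \<phi> (x + y) = \<phi> x + \<phi> y"
    and \<phi>_smult: "\<forall>c x. \<phi> (fsmult \<pi> c x) = Const c * \<phi> x"
    and \<phi>_basis: "\<forall>i<k. \<phi> (\<pi> (g i)) = g' i"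
    and Hhat: "hsg n d S Hhat \<delta>"
  shows "phsg l h n d S (\<lambda>y i. \<phi> (Hhat y i)) \<delta>"
proof -
  have hom: "polys_hom l \<pi>"
    using quot unfolding is_quotient_map_def by unfold_locales blast+
  have "\<pi> (g' i) = \<pi> (g i)" if "i < k" for i
  proof -
    have "g' i \<in> polys l" "g i \<in> polys l"
      using that g'_deg g_in polys_le_subset_polys by blast+
    moreover have "\<pi> (g' i - g i) = 0"
      using quot g'_coset polys_diff[OF calculation] that unfolding is_quotient_map_def by blast
    ultimately show ?thesis
      using polys_hom.diff[OF hom] by simp
  qed
  then have "\<forall>i<k. \<pi> (g' i) = \<pi> (g i)" by blast
  note \<phi>_section = additive_basis_lift_is_section[OF hom basis g'_deg this \<phi>_add \<phi>_smult \<phi>_basis]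
  show ?thesis
    using hsg_lift_phsg[OF hom \<phi>_section Hhat] .
qed

end
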